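(* For any positive integer $k$ and for $n\ge 3$, $\dim_{k,f}(C_n)=\frac{n}{n-1}$ if $n \le 2k+3$ and $n$ is odd; $\dim_{k,f}(C_n)=\frac{n}{n-2}$ if $n\le 2k+3$ and $n$ is even; and $\dim_{k,f}(C_n)=\frac{n}{2(k+1)}$ if $n\ge 2k+4$.
   Context: $C_n$ is the cycle on $n$ vertices. $d(x,y)$ is the distance in $G$. For a positive integer $k$, $d_k(x,y)=\min\{d(x,y),k+1\}$ and $R_k\{x,y\}=\{z\in V(G): d_k(x,z)\neq d_k(y,z)\}$. For a function $g$ on $V(G)$ and $U\subseteq V(G)$, $g(U)=\sum_{s\in U}g(s)$. A function $h:V(G)\to[0,1]$ is a $k$-truncated resolving function of $G$ if $h(R_k\{x,y\})\ge 1$ for all distinct $x,y\in V(G)$; $\dim_{k,f}(G)$ is the minimum of $h(V(G))$ over all such $h$. *)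

theory Defs
  imports "HOL-Analysis.Analysis"
begin

text \<open>A (simple, undirected) graph is given by a vertex set V and an adjacency relation E.
  A walk of length m from x to y is a list of m+1 vertices in V, consecutive ones adjacent.\<close>

definition is_walk :: "'a set \<Rightarrow> ('a \<Rightarrow> 'a \<Rightarrow> bool) \<Rightarrow> 'a list \<Rightarrow> 'a \<Rightarrow> 'a \<Rightarrow> bool" where
  "is_walk V E p x y \<longleftrightarrow> p \<noteq> [] \<and> set p \<subseteq> V \<and> hd p = x \<and> last p = y \<and>
     (\<forall>i. Suc i < length p \<longrightarrow> E (p ! i) (p ! Suc i))"

text \<open>Graph distance (for connected graphs): least length of a walk.\<close>
definition graph_dist :: "'a set \<Rightarrow> ('a \<Rightarrow> 'a \<Rightarrow> bool) \<Rightarrow> 'a \<Rightarrow> 'a \<Rightarrow> nat" where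
  "graph_dist V E x y = (LEAST m. \<exists>p. is_walk V E p x y \<and> length p = Suc m)"

definition trunc_dist :: "'a set \<Rightarrow> ('a \<Rightarrow> 'a \<Rightarrow> bool) \<Rightarrow> nat \<Rightarrow> 'a \<Rightarrow> 'a \<Rightarrow> nat" where
  "trunc_dist V E k x y = min (graph_dist V E x y) (k + 1)"

definition trunc_resolving_set :: "'a set \<Rightarrow> ('a \<Rightarrow> 'a \<Rightarrow> bool) \<Rightarrow> nat \<Rightarrow> 'a \<Rightarrow> 'a \<Rightarrow> 'a set" where
  "trunc_resolving_set V E k x y = {z \<in> V. trunc_dist V E k x z \<noteq> trunc_dist V E k y z}"

definition is_trunc_resolving_fn :: "'a set \<Rightarrow> ('a \<Rightarrow> 'a \<Rightarrow> bool) \<Rightarrow> nat \<Rightarrow> ('a \<Rightarrow> real) \<Rightarrow> bool" where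
  "is_trunc_resolving_fn V E k h \<longleftrightarrow>
     (\<forall>v\<in>V. 0 \<le> h v \<and> h v \<le> 1) \<and>
     (\<forall>x\<in>V. \<forall>y\<in>V. x \<noteq> y \<longrightarrow> (\<Sum>z\<in>trunc_resolving_set V E k x y. h z) \<ge> 1)"

definition frac_trunc_metric_dim :: "'a set \<Rightarrow> ('a \<Rightarrow> 'a \<Rightarrow> bool) \<Rightarrow> nat \<Rightarrow> real" where
  "frac_trunc_metric_dim V E k = Inf {(\<Sum>v\<in>V. h v) | h. is_trunc_resolving_fn V E k h}"

definition cycle_vertices :: "nat \<Rightarrow> nat set" where
  "cycle_vertices n = {0..<n}"

definition cycle_adj :: "nat \<Rightarrow> nat \<Rightarrow> nat \<Rightarrow> bool" where
  "cycle_adj n i j \<longleftrightarrow> i < n \<and> j < n \<and> (j = (i + 1) mod n \<or> i = (j + 1) mod n)"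

end

theory Submission
  imports Defs
begin

text \<open>
  Everything is invariant under the rotations of \<open>C\<^sub>n\<close>: \<open>R\<^sub>k{x, y}\<close> is the rotation by \<open>x\<close>
  of the set of offsets resolving \<open>0\<close> and \<open>d = y - x\<close>, so its size \<open>r(d)\<close> depends only on \<open>d\<close>.
  Averaging the resolving condition for the pairs \<open>(x, x + d)\<close> over all \<open>x\<close> gives
  \<open>h(V) \<ge> n / r(d)\<close> for every resolving function \<open>h\<close>, while the constant function
  \<open>1 / m\<close> with \<open>m = min {r(d) | d \<noteq> 0}\<close> is resolving; hence the dimension is \<open>n / m\<close>.

  If \<open>n \<le> 2k + 3\<close> no distance exceeds \<open>k + 1\<close>, so truncation is invisible and only the
  vertices equidistant from \<open>0\<close> and \<open>d\<close>, i.e. the solutions of \<open>2t = d\<close> in \<open>\<int>/n\<close>, fail to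
  resolve; there are at most two of them, at most one for odd \<open>n\<close>, and \<open>d = 1\<close> resp.
  \<open>d = 2\<close> attains this. If \<open>n \<ge> 2k + 4\<close>, the adjacent pair \<open>0, 1\<close> is resolved only by the
  \<open>2k + 2\<close> vertices at distance at most \<open>k\<close> from one of them, and every pair is resolved
  by at least \<open>2k + 2\<close> vertices: those within distance \<open>k\<close> of \<open>0\<close> on the side away
  from \<open>d\<close> together with their mirror images, or, when \<open>d\<close> is nearly antipodal, all
  vertices but the at most two equidistant ones.
\<close>

definition cycle_norm :: "nat \<Rightarrow> int \<Rightarrow> int" where
  "cycle_norm n a = min (a mod int n) ((- a) mod int n)"

lemma cycle_norm_cong: "a mod int n = b mod int n \<Longrightarrow> cycle_norm n a = cycle_norm n b"
  unfolding cycle_norm_def by (metis mod_minus_cong)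

lemma cycle_norm_uminus [simp]: "cycle_norm n (- a) = cycle_norm n a"
  by (simp add: cycle_norm_def min.commute)

lemma cycle_norm_nonneg: "0 < n \<Longrightarrow> 0 \<le> cycle_norm n a"
  by (simp add: cycle_norm_def)

lemma cycle_norm_eq_min: "0 \<le> a \<Longrightarrow> a \<le> int n \<Longrightarrow> cycle_norm n a = min a (int n - a)"
  unfolding cycle_norm_def
  by (cases "a = int n") (auto simp: zmod_zminus1_eq_if)

lemma cycle_norm_le_abs: "0 < n \<Longrightarrow> cycle_norm n a \<le> \<bar>a\<bar>"
  unfolding cycle_norm_def
  by (cases "0 \<le> a") (auto simp: zmod_le_nonneg_dividend min.coboundedI1 min.coboundedI2)

lemma cycle_norm_le_half:
  assumes "0 < n"
  shows "2 * cycle_norm n a \<le> int n"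
proof -
  have "cycle_norm n a = cycle_norm n (a mod int n)"
    by (rule cycle_norm_cong) simp
  also have "\<dots> = min (a mod int n) (int n - a mod int n)"
    using assms by (intro cycle_norm_eq_min) (simp_all add: order.strict_implies_order)
  finally show ?thesis by (simp add: min_def)
qed

lemma cycle_norm_abs_representative:
  assumes "0 < n"
  obtains b where "b mod int n = a mod int n" and "\<bar>b\<bar> = cycle_norm n a"
proof (cases "a mod int n \<le> (- a) mod int n")
  case True
  then show ?thesis using assms that[of "a mod int n"] by (simp add: cycle_norm_def)
next
  case False
  then show ?thesis using assms that[of "- ((- a) mod int n)"]
    by (simp add: cycle_norm_def mod_minus_eq)
qed

lemma cycle_norm_add_le:
  assumes "0 < n"
  shows "cycle_norm n (a + b) \<le> cycle_norm n a + cycle_norm n b"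
proof -
  obtain a' where a': "a' mod int n = a mod int n" "\<bar>a'\<bar> = cycle_norm n a"
    using cycle_norm_abs_representative[OF assms] .
  obtain b' where b': "b' mod int n = b mod int n" "\<bar>b'\<bar> = cycle_norm n b"
    using cycle_norm_abs_representative[OF assms] .
  have "cycle_norm n (a + b) = cycle_norm n (a' + b')"
    using a'(1) b'(1) by (intro cycle_norm_cong mod_add_cong) simp_all
  also have "\<dots> \<le> \<bar>a' + b'\<bar>" using assms by (rule cycle_norm_le_abs)
  finally show ?thesis using a'(2) b'(2) by linarith
qed

lemma cycle_norm_eqD:
  assumes "cycle_norm n a = cycle_norm n b"
  shows "a mod int n = b mod int n \<or> a mod int n = (- b) mod int n"
proof -
  have "a mod int n = b mod int n \<or> a mod int n = (- b) mod int n
      \<or> (- a) mod int n = b mod int n \<or> (- a) mod int n = (- b) mod int n"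
    using assms unfolding cycle_norm_def min_def by (simp split: if_splits)
  then show ?thesis by (metis minus_minus mod_minus_cong)
qed

lemma is_walk_map_upt:
  assumes "\<And>i. i \<le> m \<Longrightarrow> f i \<in> V" and "\<And>i. i < m \<Longrightarrow> E (f i) (f (Suc i))"
  shows "is_walk V E (map f [0..<Suc m]) (f 0) (f m)"
  unfolding is_walk_def
proof (intro conjI allI impI)
  show "set (map f [0..<Suc m]) \<subseteq> V"
    using assms(1) by (auto simp del: upt_Suc)
  show "hd (map f [0..<Suc m]) = f 0"
    by (simp add: hd_map del: upt_Suc)
  fix i assume "Suc i < length (map f [0..<Suc m])"
  then show "E (map f [0..<Suc m] ! i) (map f [0..<Suc m] ! Suc i)"
    using assms(2)[of i] by (simp del: upt_Suc)
qed (simp_all add: last_map del: upt_Suc)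

lemma cycle_adj_iff:
  "cycle_adj n a b \<longleftrightarrow>
     a < n \<and> b < n \<and> (int b = (int a + 1) mod int n \<or> int a = (int b + 1) mod int n)"
proof -
  have "(int c + 1) mod int n = int ((c + 1) mod n)" for c
    by (simp only: of_nat_mod of_nat_add of_nat_1)
  then show ?thesis unfolding cycle_adj_def by simp
qed

lemma cycle_walk:
  assumes "0 < n" and "a < n" and "s = 1 \<or> s = -1"
  shows "is_walk (cycle_vertices n) (cycle_adj n)
           (map (\<lambda>i. nat ((int a + s * int i) mod int n)) [0..<Suc m])
           a (nat ((int a + s * int m) mod int n))"
proof -
  let ?v = "\<lambda>i. (int a + s * int i) mod int n"
  have step: "?v (Suc i) = (?v i + s) mod int n" for i
    by (simp add: algebra_simps mod_add_right_eq)
  have "is_walk (cycle_vertices n) (cycle_adj n) (map (\<lambda>i. nat (?v i)) [0..<Suc m])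
          (nat (?v 0)) (nat (?v m))"
  proof (rule is_walk_map_upt)
    show "nat (?v i) \<in> cycle_vertices n" for i
      using assms(1) by (simp add: cycle_vertices_def nat_less_iff)
    show "cycle_adj n (nat (?v i)) (nat (?v (Suc i)))" for i
      unfolding cycle_adj_iff using assms step[of i]
      by (auto simp: nat_less_iff mod_add_left_eq)
  qed
  then show ?thesis using assms(2) by simp
qed

lemma cycle_norm_le_walk_length:
  assumes "0 < n"
  shows "is_walk (cycle_vertices n) (cycle_adj n) p x y \<Longrightarrow>
           cycle_norm n (int y - int x) < int (length p)"
proof (induction p arbitrary: x)
  case Nil
  then show ?case by (simp add: is_walk_def)
next
  case (Cons u p)
  show ?case
  proof (cases "p = []")
    case True
    then show ?thesis using Cons.prems by (auto simp: is_walk_def cycle_norm_def)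
  next
    case False
    have u: "u = x" and last: "last p = y" and set: "set p \<subseteq> cycle_vertices n"
      and edge: "\<And>i. i < length p \<Longrightarrow> cycle_adj n ((u # p) ! i) (p ! i)"
      using Cons.prems False unfolding is_walk_def by auto
    have walk: "is_walk (cycle_vertices n) (cycle_adj n) p (hd p) y"
      unfolding is_walk_def using False last set edge by fastforce
    have adj: "cycle_adj n x (hd p)"
      using edge[of 0] u False by (simp add: hd_conv_nth)
    have "cycle_norm n (int (hd p) - int x) \<le> 1"
    proof -
      from adj have "(int (hd p) - int x) mod int n = 1 mod int n
          \<or> (int (hd p) - int x) mod int n = (- 1) mod int n"
        unfolding cycle_adj_iff by (auto simp: mod_diff_left_eq mod_diff_right_eq)
      then show ?thesis
        using cycle_norm_cong cycle_norm_le_abs[OF assms] by (metis abs_1 abs_minus)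
    qed
    moreover have "cycle_norm n (int y - int x)
        \<le> cycle_norm n (int y - int (hd p)) + cycle_norm n (int (hd p) - int x)"
      using cycle_norm_add_le[OF assms, of "int y - int (hd p)" "int (hd p) - int x"] by simp
    ultimately show ?thesis using Cons.IH[OF walk] by simp
  qed
qed

lemma graph_dist_cycle:
  assumes "a < n" and "b < n"
  shows "graph_dist (cycle_vertices n) (cycle_adj n) a b = nat (cycle_norm n (int b - int a))"
  unfolding graph_dist_def
proof (rule Least_equality)
  have n: "0 < n" using assms by simp
  obtain e where e: "e mod int n = (int b - int a) mod int n"
      "\<bar>e\<bar> = cycle_norm n (int b - int a)"
    using cycle_norm_abs_representative[OF n] .
  define s :: int where "s = (if e < 0 then -1 else 1)"
  define p where "p = map (\<lambda>i. nat ((int a + s * int i) mod int n)) [0..<Suc (nat \<bar>e\<bar>)]"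
  have "(int a + e) mod int n = (int a + (int b - int a)) mod int n"
    using e(1) by (intro mod_add_cong) simp_all
  moreover have "s * int (nat \<bar>e\<bar>) = e" by (simp add: s_def)
  ultimately have "nat ((int a + s * int (nat \<bar>e\<bar>)) mod int n) = b"
    using assms(2) by simp
  moreover have "s = 1 \<or> s = -1" by (simp add: s_def)
  ultimately have "is_walk (cycle_vertices n) (cycle_adj n) p a b"
    using cycle_walk[OF n assms(1), of s "nat \<bar>e\<bar>"] unfolding p_def by simp
  moreover have "length p = Suc (nat (cycle_norm n (int b - int a)))"
    using e(2) by (simp add: p_def)
  ultimately show "\<exists>p. is_walk (cycle_vertices n) (cycle_adj n) p a b
      \<and> length p = Suc (nat (cycle_norm n (int b - int a)))" by blast
next
  fix m assume "\<exists>p. is_walk (cycle_vertices n) (cycle_adj n) p a b \<and> length p = Suc m"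
  then show "nat (cycle_norm n (int b - int a)) \<le> m"
    using cycle_norm_le_walk_length[of n] assms by fastforce
qed

text \<open>
  \<open>cycle_resolves n k d t\<close>: for every vertex \<open>x\<close>, the vertex \<open>x + t\<close> resolves \<open>x\<close> and \<open>x + d\<close>
  (see \<open>trunc_resolving_set_cycle\<close>).
\<close>

definition cycle_resolves :: "nat \<Rightarrow> nat \<Rightarrow> int \<Rightarrow> int \<Rightarrow> bool" where
  "cycle_resolves n k d t \<longleftrightarrow>
     min (cycle_norm n t) (int k + 1) \<noteq> min (cycle_norm n (t - d)) (int k + 1)"

definition cycle_resolving_offsets :: "nat \<Rightarrow> nat \<Rightarrow> int \<Rightarrow> nat set" where
  "cycle_resolving_offsets n k d = {t \<in> {0..<n}. cycle_resolves n k d (int t)}"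

lemma finite_cycle_resolving_offsets [simp]: "finite (cycle_resolving_offsets n k d)"
  by (simp add: cycle_resolving_offsets_def)

lemma cycle_resolves_cong:
  assumes "d mod int n = d' mod int n" and "t mod int n = t' mod int n"
  shows "cycle_resolves n k d t = cycle_resolves n k d' t'"
  unfolding cycle_resolves_def
  using cycle_norm_cong[OF assms(2)] cycle_norm_cong[OF mod_diff_cong[OF assms(2,1)]] by simp

lemma cycle_resolving_offsets_cong:
  assumes "d mod int n = d' mod int n"
  shows "cycle_resolving_offsets n k d = cycle_resolving_offsets n k d'"
  using cycle_resolves_cong[OF assms refl] by (simp add: cycle_resolving_offsets_def)

lemma trunc_dist_cycle:
  assumes "x < n" and "z < n"
  shows "int (trunc_dist (cycle_vertices n) (cycle_adj n) k x z) =
           min (cycle_norm n (int z - int x)) (int k + 1)"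
  using cycle_norm_nonneg[of n "int z - int x"] assms
  by (simp add: trunc_dist_def graph_dist_cycle)

lemma trunc_resolving_set_cycle:
  assumes "x < n" and "y < n"
  shows "trunc_resolving_set (cycle_vertices n) (cycle_adj n) k x y =
           {z \<in> {0..<n}. cycle_resolves n k (int y - int x) (int z - int x)}"
proof -
  let ?d = "trunc_dist (cycle_vertices n) (cycle_adj n) k"
  have "?d x z \<noteq> ?d y z \<longleftrightarrow> cycle_resolves n k (int y - int x) (int z - int x)"
    if "z < n" for z
  proof -
    have "?d x z \<noteq> ?d y z \<longleftrightarrow> int (?d x z) \<noteq> int (?d y z)"
      by simp
    then show ?thesis
      using trunc_dist_cycle[OF assms(1) that, of k] trunc_dist_cycle[OF assms(2) that, of k]
      unfolding cycle_resolves_def by simp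
  qed
  then show ?thesis
    unfolding trunc_resolving_set_def cycle_vertices_def by auto
qed

lemma bij_betw_rotate_cycle:
  fixes x n :: nat
  assumes "0 < n"
  shows "bij_betw (\<lambda>t. (x + t) mod n) {0..<n} {0..<n}"
proof -
  have inj: "inj_on (\<lambda>t. (x + t) mod n) {0..<n}"
  proof (rule inj_onI)
    fix a b assume ab: "a \<in> {0..<n}" "b \<in> {0..<n}" and "(x + a) mod n = (x + b) mod n"
    then have "(int x + int a) mod int n = (int x + int b) mod int n"
      by (simp flip: of_nat_add of_nat_mod)
    then have "((int x + int a) - int x) mod int n = ((int x + int b) - int x) mod int n"
      by (rule mod_diff_cong) simp
    then show "a = b" using ab by simp
  qed
  moreover have "(\<lambda>t. (x + t) mod n) ` {0..<n} = {0..<n}"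
    using assms inj by (intro endo_inj_surj) auto
  ultimately show ?thesis by (simp add: bij_betw_def)
qed

lemma rotate_cycle_diff_mod: "(int ((x + t) mod n) - int x) mod int n = int t mod int n"
  by (simp add: of_nat_mod mod_diff_left_eq)

lemma bij_betw_cycle_resolving_offsets:
  assumes "x < n" and "y < n"
  shows "bij_betw (\<lambda>t. (x + t) mod n) (cycle_resolving_offsets n k (int y - int x))
           (trunc_resolving_set (cycle_vertices n) (cycle_adj n) k x y)"
  unfolding trunc_resolving_set_cycle[OF assms] cycle_resolving_offsets_def
proof (rule bij_betw_Collect)
  show "bij_betw (\<lambda>t. (x + t) mod n) {0..<n} {0..<n}"
    using assms by (intro bij_betw_rotate_cycle) simp
  fix t
  show "cycle_resolves n k (int y - int x) (int ((x + t) mod n) - int x)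
      \<longleftrightarrow> cycle_resolves n k (int y - int x) (int t)"
    by (rule cycle_resolves_cong[OF refl rotate_cycle_diff_mod])
qed

lemma sum_rotate_cycle:
  fixes h :: "nat \<Rightarrow> 'a::comm_monoid_add"
  assumes "0 < n"
  shows "(\<Sum>x\<in>{0..<n}. h ((x + t) mod n)) = (\<Sum>x\<in>{0..<n}. h x)"
  using sum.reindex_bij_betw[OF bij_betw_rotate_cycle[OF assms, of t], of h]
  by (simp add: add.commute)

lemma sum_trunc_resolving_fn_cycle_lower_bound:
  assumes h: "is_trunc_resolving_fn (cycle_vertices n) (cycle_adj n) k h" and "0 < d" and "d < n"
  shows "real n \<le>
           real (card (cycle_resolving_offsets n k (int d))) * (\<Sum>v\<in>cycle_vertices n. h v)"
proof -
  let ?O = "cycle_resolving_offsets n k (int d)"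
  have n: "0 < n" using assms by simp
  have "1 \<le> (\<Sum>t\<in>?O. h ((x + t) mod n))" if x: "x < n" for x
  proof -
    let ?y = "(x + d) mod n"
    have y: "?y < n" using n by simp
    have inj: "inj_on (\<lambda>t. (x + t) mod n) {0..<n}"
      using bij_betw_rotate_cycle[OF n] by (rule bij_betw_imp_inj_on)
    have "?y \<noteq> (x + 0) mod n"
    proof
      assume "?y = (x + 0) mod n"
      from inj_onD[OF inj this] have "d = 0" using assms(3) n by simp
      then show False using assms(2) by simp
    qed
    then have "?y \<noteq> x" using x by simp
    then have "1 \<le> (\<Sum>z\<in>trunc_resolving_set (cycle_vertices n) (cycle_adj n) k x ?y. h z)"
      using h x y unfolding is_trunc_resolving_fn_def cycle_vertices_def by simp
    also have "\<dots> = (\<Sum>t\<in>cycle_resolving_offsets n k (int ?y - int x). h ((x + t) mod n))"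
      by (rule sum.reindex_bij_betw[OF bij_betw_cycle_resolving_offsets[OF x y], symmetric])
    also have "\<dots> = (\<Sum>t\<in>?O. h ((x + t) mod n))"
      using cycle_resolving_offsets_cong[OF rotate_cycle_diff_mod] by simp
    finally show ?thesis .
  qed
  then have "real n \<le> (\<Sum>x\<in>{0..<n}. \<Sum>t\<in>?O. h ((x + t) mod n))"
    using sum_mono[of "{0..<n}" "\<lambda>_. 1::real"] by simp
  also have "\<dots> = (\<Sum>t\<in>?O. \<Sum>x\<in>{0..<n}. h ((x + t) mod n))"
    by (rule sum.swap)
  also have "\<dots> = real (card ?O) * (\<Sum>v\<in>cycle_vertices n. h v)"
    by (simp add: sum_rotate_cycle[OF n] cycle_vertices_def)
  finally show ?thesis .
qed

lemma frac_trunc_metric_dim_cycle: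
  assumes m: "0 < m"
    and lower: "\<And>d. 0 < d \<Longrightarrow> d < n \<Longrightarrow> m \<le> card (cycle_resolving_offsets n k (int d))"
    and attained: "0 < d\<^sub>0" "d\<^sub>0 < n" "card (cycle_resolving_offsets n k (int d\<^sub>0)) \<le> m"
  shows "frac_trunc_metric_dim (cycle_vertices n) (cycle_adj n) k = real n / real m"
  unfolding frac_trunc_metric_dim_def
proof (rule cInf_eq_minimum)
  have "is_trunc_resolving_fn (cycle_vertices n) (cycle_adj n) k (\<lambda>_. 1 / real m)"
    unfolding is_trunc_resolving_fn_def
  proof (intro conjI ballI impI)
    fix x y assume x: "x \<in> cycle_vertices n" and y: "y \<in> cycle_vertices n" and "x \<noteq> y"
    then have xy: "x < n" "y < n" "int y mod int n \<noteq> int x mod int n"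
      by (simp_all add: cycle_vertices_def)
    let ?d = "nat ((int y - int x) mod int n)"
    have "\<not> int n dvd int y - int x"
      using xy(3) mod_eq_dvd_iff by blast
    then have "(int y - int x) mod int n \<noteq> 0"
      by (simp add: dvd_eq_mod_eq_0)
    then have d: "0 < ?d" "?d < n"
      using xy(1) by (simp_all add: order_le_neq_trans nat_less_iff)
    have "card (trunc_resolving_set (cycle_vertices n) (cycle_adj n) k x y)
        = card (cycle_resolving_offsets n k (int y - int x))"
      using bij_betw_same_card[OF bij_betw_cycle_resolving_offsets[OF xy(1,2)]] by simp
    also have "\<dots> = card (cycle_resolving_offsets n k (int ?d))"
      using xy by (intro arg_cong[where f = card] cycle_resolving_offsets_cong) simp
    finally have "m \<le> card (trunc_resolving_set (cycle_vertices n) (cycle_adj n) k x y)"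
      using lower[OF d] by simp
    then show "1 \<le> (\<Sum>z\<in>trunc_resolving_set (cycle_vertices n) (cycle_adj n) k x y. 1 / real m)"
      using m by (simp add: field_simps)
  qed (use m in auto)
  then show "real n / real m \<in> {\<Sum>v\<in>cycle_vertices n. h v |h.
      is_trunc_resolving_fn (cycle_vertices n) (cycle_adj n) k h}"
    by (intro CollectI exI[of _ "\<lambda>_. 1 / real m"]) (simp add: cycle_vertices_def)
next
  fix s assume "s \<in> {\<Sum>v\<in>cycle_vertices n. h v |h.
      is_trunc_resolving_fn (cycle_vertices n) (cycle_adj n) k h}"
  then obtain h where h: "is_trunc_resolving_fn (cycle_vertices n) (cycle_adj n) k h"
    and s: "s = (\<Sum>v\<in>cycle_vertices n. h v)" by blast
  have "0 \<le> s"
    using h unfolding s is_trunc_resolving_fn_def by (simp add: sum_nonneg)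
  have "real n \<le> real (card (cycle_resolving_offsets n k (int d\<^sub>0))) * s"
    unfolding s using h attained(1,2) by (rule sum_trunc_resolving_fn_cycle_lower_bound)
  also have "\<dots> \<le> real m * s"
    using attained(3) \<open>0 \<le> s\<close> by (intro mult_right_mono) simp_all
  finally show "real n / real m \<le> s"
    using m by (simp add: field_simps)
qed

lemma cycle_resolvesI:
  assumes "cycle_norm n t \<noteq> cycle_norm n (t - d)"
    and "min (cycle_norm n t) (cycle_norm n (t - d)) \<le> int k"
  shows "cycle_resolves n k d t"
  using assms unfolding cycle_resolves_def min_def by (auto split: if_splits)

lemma cycle_resolves_reflect: "cycle_resolves n k d (d - t) = cycle_resolves n k d t"
proof -
  have "cycle_norm n (d - t) = cycle_norm n (t - d)"
    using cycle_norm_uminus[of n "t - d"] by simp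
  moreover have "cycle_norm n (d - t - d) = cycle_norm n t"
    using cycle_norm_uminus[of n t] by simp
  ultimately show ?thesis
    unfolding cycle_resolves_def by (simp add: eq_commute)
qed

lemma cycle_resolves_uminus: "cycle_resolves n k (- d) (- t) = cycle_resolves n k d t"
  using cycle_norm_uminus[of n "t - d"] by (simp add: cycle_resolves_def)

lemma inj_on_mod_interval: "inj_on (\<lambda>t. t mod int n) {a..<a + int n}"
proof (rule inj_onI)
  fix s t assume s: "s \<in> {a..<a + int n}" and t: "t \<in> {a..<a + int n}"
    and "s mod int n = t mod int n"
  then have "(s - a) mod int n = (t - a) mod int n"
    by (intro mod_diff_cong) simp_all
  then show "s = t" using s t by simp
qed

lemma card_le_card_cycle_resolving_offsets:
  assumes n: "0 < n" and T: "finite T" "inj_on (\<lambda>t. t mod int n) T"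
    and res: "\<And>t. t \<in> T \<Longrightarrow> cycle_resolves n k d t"
  shows "card T \<le> card (cycle_resolving_offsets n k d)"
proof (rule card_inj_on_le)
  show "inj_on (\<lambda>t. nat (t mod int n)) T"
  proof (rule inj_onI)
    fix s t assume "s \<in> T" "t \<in> T" "nat (s mod int n) = nat (t mod int n)"
    then show "s = t" using n inj_onD[OF T(2)] by (simp add: eq_nat_nat_iff)
  qed
  show "(\<lambda>t. nat (t mod int n)) ` T \<subseteq> cycle_resolving_offsets n k d"
  proof
    fix u assume "u \<in> (\<lambda>t. nat (t mod int n)) ` T"
    then obtain t where t: "t \<in> T" and u: "u = nat (t mod int n)" by blast
    have "cycle_resolves n k d (int u) = cycle_resolves n k d t"
      using n by (intro cycle_resolves_cong) (simp_all add: u)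
    then show "u \<in> cycle_resolving_offsets n k d"
      using res[OF t] n by (simp add: cycle_resolving_offsets_def u nat_less_iff)
  qed
qed simp

lemma card_cycle_resolving_offsets_uminus:
  assumes "0 < n"
  shows "card (cycle_resolving_offsets n k (- d)) = card (cycle_resolving_offsets n k d)"
proof -
  have le: "card (cycle_resolving_offsets n k (- e)) \<le> card (cycle_resolving_offsets n k e)" for e
  proof -
    let ?T = "(\<lambda>t. - int t) ` cycle_resolving_offsets n k (- e)"
    have inj: "inj_on (\<lambda>t. - int t) (cycle_resolving_offsets n k (- e))"
      by (rule inj_onI) simp
    have "inj_on (\<lambda>t. t mod int n) ?T"
    proof (rule inj_onI)
      fix s t assume "s \<in> ?T" "t \<in> ?T" "s mod int n = t mod int n"
      then show "s = t"
        using mod_minus_cong[of s "int n" t]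
        by (auto simp: cycle_resolving_offsets_def)
    qed
    moreover have "cycle_resolves n k e t" if "t \<in> ?T" for t
    proof -
      from that obtain u where "u \<in> cycle_resolving_offsets n k (- e)" and "t = - int u"
        by blast
      then show ?thesis
        using cycle_resolves_uminus[of n k e t] by (simp add: cycle_resolving_offsets_def)
    qed
    ultimately have "card ?T \<le> card (cycle_resolving_offsets n k e)"
      using assms by (intro card_le_card_cycle_resolving_offsets) auto
    then show ?thesis using card_image[OF inj] by simp
  qed
  show ?thesis using le[of d] le[of "- d"] by simp
qed

lemma double_mod_eq_cases:
  assumes "0 \<le> t" "t < int n" and "(2 * t) mod int n = r"
  shows "2 * t = r \<or> 2 * t = r + int n"
proof (cases "2 * t < int n")
  case True
  then show ?thesis using assms by simp
next
  case False
  have "(2 * t) mod int n = (2 * t - int n + int n) mod int n"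
    by simp
  also have "\<dots> = (2 * t - int n) mod int n"
    by (rule mod_add_self2)
  also have "\<dots> = 2 * t - int n"
    using False assms(2) by (intro mod_pos_pos_trivial) simp_all
  finally show ?thesis using assms(3) by simp
qed

lemma card_cycle_midpoints_le:
  fixes d :: int
  assumes "0 < n"
  defines "M \<equiv> {t \<in> {0..<n}. (2 * int t) mod int n = d mod int n}"
  shows "card M \<le> 2" and "odd n \<Longrightarrow> card M \<le> 1"
proof -
  let ?r = "d mod int n"
  have M: "2 * int t = ?r \<or> 2 * int t = ?r + int n" if "t \<in> M" for t
    using that double_mod_eq_cases[of "int t" n ?r] by (simp add: M_def)
  have "M \<subseteq> {nat (?r div 2), nat ((?r + int n) div 2)}"
    using M by force
  then have "card M \<le> card {nat (?r div 2), nat ((?r + int n) div 2)}"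
    by (intro card_mono) simp_all
  also have "\<dots> \<le> 2" by (simp add: card_insert_if)
  finally show "card M \<le> 2" .
  assume "odd n"
  have "t = nat ((if even ?r then ?r else ?r + int n) div 2)" if "t \<in> M" for t
    using M[OF that]
  proof
    assume "2 * int t = ?r"
    then show ?thesis by (simp flip: \<open>2 * int t = ?r\<close>)
  next
    assume "2 * int t = ?r + int n"
    moreover from this have "odd ?r"
      using \<open>odd n\<close> by (metis dvd_triv_left even_add even_of_nat)
    ultimately show ?thesis by simp
  qed
  then have "M \<subseteq> {nat ((if even ?r then ?r else ?r + int n) div 2)}"
    by blast
  then show "card M \<le> 1"
    using card_mono[of "{nat ((if even ?r then ?r else ?r + int n) div 2)}" M] by simp
qed

lemma card_cycle_resolving_offsets_ge:
  assumes n: "0 < n" and d: "d mod int n \<noteq> 0"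
    and near: "\<And>t. cycle_norm n t \<noteq> cycle_norm n (t - d) \<Longrightarrow> cycle_resolves n k d t"
  shows "n - 2 \<le> card (cycle_resolving_offsets n k d)"
    and "odd n \<Longrightarrow> n - 1 \<le> card (cycle_resolving_offsets n k d)"
proof -
  let ?M = "{t \<in> {0..<n}. (2 * int t) mod int n = d mod int n}"
  have "{0..<n} - ?M \<subseteq> cycle_resolving_offsets n k d"
  proof
    fix t assume t: "t \<in> {0..<n} - ?M"
    show "t \<in> cycle_resolving_offsets n k d"
    proof (rule ccontr)
      assume "t \<notin> cycle_resolving_offsets n k d"
      then have "cycle_norm n (int t) = cycle_norm n (int t - d)"
        using t near by (auto simp: cycle_resolving_offsets_def)
      then consider "int t mod int n = (int t - d) mod int n"
        | "int t mod int n = (- (int t - d)) mod int n"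
        using cycle_norm_eqD by blast
      then show False
      proof cases
        case 1
        then have "(int t - int t) mod int n = (int t - (int t - d)) mod int n"
          by (intro mod_diff_cong) simp_all
        then show False using d by simp
      next
        case 2
        then have "(int t + int t) mod int n = (int t + (- (int t - d))) mod int n"
          by (intro mod_add_cong) simp_all
        then show False using t by simp
      qed
    qed
  qed
  then have "card ({0..<n} - ?M) \<le> card (cycle_resolving_offsets n k d)"
    by (intro card_mono) simp_all
  moreover have "card ({0..<n} - ?M) = n - card ?M"
    by (subst card_Diff_subset) auto
  ultimately show "n - 2 \<le> card (cycle_resolving_offsets n k d)"
    and "odd n \<Longrightarrow> n - 1 \<le> card (cycle_resolving_offsets n k d)"
    using card_cycle_midpoints_le[OF n, of d] by linarith+
qed

lemma cycle_resolves_if_small: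
  assumes "0 < n" and "n \<le> 2 * k + 3" and "cycle_norm n t \<noteq> cycle_norm n (t - d)"
  shows "cycle_resolves n k d t"
  using assms cycle_norm_le_half[OF assms(1), of t] cycle_norm_le_half[OF assms(1), of "t - d"]
  by (intro cycle_resolvesI) auto

lemma card_cycle_resolving_offsets_ge_far:
  assumes d: "0 < d" and far: "d + 2 * int k + 1 \<le> int n"
  shows "2 * k + 2 \<le> card (cycle_resolving_offsets n k d)"
proof -
  have n: "0 < n" using assms by simp
  have resolves_neg: "cycle_resolves n k d (- j)" if "0 \<le> j" "j \<le> int k" for j
  proof (rule cycle_resolvesI)
    have "cycle_norm n (- j) = j"
      using that d far cycle_norm_eq_min[of j n] by (simp add: min_def)
    moreover have "cycle_norm n (- j - d) = min (j + d) (int n - (j + d))"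
      using that d far cycle_norm_eq_min[of "j + d" n] cycle_norm_uminus[of n "j + d"] by simp
    ultimately show "cycle_norm n (- j) \<noteq> cycle_norm n (- j - d)"
      and "min (cycle_norm n (- j)) (cycle_norm n (- j - d)) \<le> int k"
      using that d far by auto
  qed
  let ?T = "{- int k..0} \<union> {d..d + int k}"
  have "card ?T = 2 * k + 2"
    using d by (subst card_Un_disjoint) auto
  moreover have "card ?T \<le> card (cycle_resolving_offsets n k d)"
  proof (rule card_le_card_cycle_resolving_offsets[OF n])
    show "inj_on (\<lambda>t. t mod int n) ?T"
      using d far by (intro inj_on_subset[OF inj_on_mod_interval[of n "- int k"]]) auto
    show "cycle_resolves n k d t" if "t \<in> ?T" for t
    proof (cases "t \<le> 0")
      case True
      then show ?thesis using that d resolves_neg[of "- t"] by simp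
    next
      case False
      then show ?thesis using that resolves_neg[of "t - d"] cycle_resolves_reflect[of n k d t] by simp
    qed
  qed simp
  ultimately show ?thesis by simp
qed

lemma cycle_norm_min_le_if_nearly_antipodal:
  assumes "0 < n" and "2 * d \<le> int n" and "int n \<le> d + 2 * int k"
  shows "min (cycle_norm n t) (cycle_norm n (t - d)) \<le> int k"
proof -
  let ?s = "t mod int n"
  have s: "0 \<le> ?s" "?s < int n" using assms(1) by simp_all
  have "cycle_norm n t \<le> ?s"
    using cycle_norm_cong[of t n ?s] cycle_norm_le_abs[OF assms(1), of ?s] s by simp
  moreover have "cycle_norm n t \<le> int n - ?s"
    using cycle_norm_cong[of t n "?s - int n"] cycle_norm_le_abs[OF assms(1), of "?s - int n"] s
    by simp
  moreover have "cycle_norm n (t - d) \<le> \<bar>?s - d\<bar>"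
    using cycle_norm_cong[of "t - d" n "?s - d"] cycle_norm_le_abs[OF assms(1), of "?s - d"]
    by (simp add: mod_diff_left_eq)
  ultimately show ?thesis using assms(2,3) by linarith
qed

lemma card_cycle_resolving_offsets_ge_large:
  assumes n: "2 * k + 4 \<le> n" and d: "d mod int n \<noteq> 0"
  shows "2 * k + 2 \<le> card (cycle_resolving_offsets n k d)"
proof -
  have n0: "0 < n" using n by simp
  have half: "2 * k + 2 \<le> card (cycle_resolving_offsets n k e)"
    if e: "0 < e" "2 * e \<le> int n" for e
  proof (cases "e + 2 * int k + 1 \<le> int n")
    case True
    with e(1) show ?thesis by (rule card_cycle_resolving_offsets_ge_far)
  next
    case False
    have "e mod int n \<noteq> 0" using e n by simp
    moreover have "cycle_resolves n k e t" if "cycle_norm n t \<noteq> cycle_norm n (t - e)" for t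
      using that cycle_norm_min_le_if_nearly_antipodal[OF n0 e(2), of k t] False
      by (intro cycle_resolvesI) simp_all
    ultimately have "n - 2 \<le> card (cycle_resolving_offsets n k e)"
      using n0 by (intro card_cycle_resolving_offsets_ge)
    then show ?thesis using n by linarith
  qed
  let ?r = "d mod int n"
  have r: "0 < ?r" "?r < int n" using d n0 by (simp_all add: order_le_neq_trans)
  show ?thesis
  proof (cases "2 * ?r \<le> int n")
    case True
    then show ?thesis using half[OF r(1)] cycle_resolving_offsets_cong[of ?r n d k] by simp
  next
    case False
    have "(int n - ?r) mod int n = int n - ?r"
      using r by (intro mod_pos_pos_trivial) simp_all
    also have "\<dots> = (- d) mod int n"
      using d by (simp add: zmod_zminus1_eq_if)
    finally have "(int n - ?r) mod int n = (- d) mod int n" .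
    then have "cycle_resolving_offsets n k (int n - ?r) = cycle_resolving_offsets n k (- d)"
      by (rule cycle_resolving_offsets_cong)
    then have "2 * k + 2 \<le> card (cycle_resolving_offsets n k (- d))"
      using half[of "int n - ?r"] r False by simp
    then show ?thesis using card_cycle_resolving_offsets_uminus[OF n0] by simp
  qed
qed

lemma card_cycle_resolving_offsets_le:
  assumes "S \<subseteq> {0..<n}" and "\<And>t. t \<in> S \<Longrightarrow> \<not> cycle_resolves n k d (int t)"
  shows "card (cycle_resolving_offsets n k d) \<le> n - card S"
proof -
  have "cycle_resolving_offsets n k d \<subseteq> {0..<n} - S"
    using assms(2) by (auto simp: cycle_resolving_offsets_def)
  then have "card (cycle_resolving_offsets n k d) \<le> card ({0..<n} - S)"
    by (intro card_mono) simp_all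
  also have "\<dots> = n - card S"
    using assms(1) finite_subset[OF assms(1)] by (simp add: card_Diff_subset)
  finally show ?thesis .
qed

lemma card_cycle_resolving_offsets_odd_le:
  assumes "n = 2 * m + 1" and "1 \<le> m"
  shows "card (cycle_resolving_offsets n k 1) \<le> n - 1"
proof -
  have "cycle_norm n (int (m + 1)) = int m" "cycle_norm n (int (m + 1) - 1) = int m"
    using assms(1) cycle_norm_eq_min[of "int (m + 1)" n] cycle_norm_eq_min[of "int m" n] by simp_all
  then have "\<not> cycle_resolves n k 1 (int (m + 1))"
    by (simp add: cycle_resolves_def)
  then have "card (cycle_resolving_offsets n k 1) \<le> n - card {m + 1}"
    using assms by (intro card_cycle_resolving_offsets_le) auto
  then show ?thesis by simp
qed

lemma card_cycle_resolving_offsets_even_le: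
  assumes "n = 2 * m" and "2 \<le> m"
  shows "card (cycle_resolving_offsets n k 2) \<le> n - 2"
proof -
  have "cycle_norm n 1 = 1"
    using assms cycle_norm_eq_min[of 1 n] by simp
  then have "\<not> cycle_resolves n k 2 (int 1)"
    using cycle_norm_uminus[of n 1] by (simp add: cycle_resolves_def)
  moreover have "cycle_norm n (int (m + 1)) = int m - 1" "cycle_norm n (int m - 1) = int m - 1"
    using assms cycle_norm_eq_min[of "int (m + 1)" n] cycle_norm_eq_min[of "int m - 1" n]
    by simp_all
  then have "\<not> cycle_resolves n k 2 (int (m + 1))"
    by (simp add: cycle_resolves_def)
  ultimately have "card (cycle_resolving_offsets n k 2) \<le> n - card {1, m + 1}"
    using assms by (intro card_cycle_resolving_offsets_le) auto
  then show ?thesis using assms(2) by simp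
qed

lemma card_cycle_resolving_offsets_adjacent_le:
  assumes "2 * k + 2 \<le> n"
  shows "card (cycle_resolving_offsets n k 1) \<le> 2 * k + 2"
proof -
  have "\<not> cycle_resolves n k 1 (int t)" if t: "t \<in> {k + 2..<n - k}" for t
  proof -
    have "int k + 1 \<le> cycle_norm n (int t)" "int k + 1 \<le> cycle_norm n (int t - 1)"
      using t cycle_norm_eq_min[of "int t" n] cycle_norm_eq_min[of "int t - 1" n] by auto
    then show ?thesis by (simp add: cycle_resolves_def)
  qed
  then show ?thesis
    using card_cycle_resolving_offsets_le[of "{k + 2..<n - k}" n k 1] assms by auto
qed

lemma frac_trunc_metric_dim_small_odd_cycle:
  assumes "3 \<le> n" and "n \<le> 2 * k + 3" and "odd n"
  shows "frac_trunc_metric_dim (cycle_vertices n) (cycle_adj n) k = real n / (real n - 1)"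
proof -
  have n: "0 < n" using assms(1) by simp
  obtain m where m: "n = 2 * m + 1" using assms(3) by (rule oddE)
  have "frac_trunc_metric_dim (cycle_vertices n) (cycle_adj n) k = real n / real (n - 1)"
  proof (rule frac_trunc_metric_dim_cycle[where d\<^sub>0 = 1])
    show "n - 1 \<le> card (cycle_resolving_offsets n k (int d))" if "0 < d" "d < n" for d
      using that assms(3) cycle_resolves_if_small[OF n assms(2)]
      by (intro card_cycle_resolving_offsets_ge(2)[OF n]) simp_all
    show "card (cycle_resolving_offsets n k (int 1)) \<le> n - 1"
      using card_cycle_resolving_offsets_odd_le[OF m] m assms(1) by simp
  qed (use assms(1) in auto)
  then show ?thesis using assms(1) by simp
qed

lemma frac_trunc_metric_dim_small_even_cycle:
  assumes "3 \<le> n" and "n \<le> 2 * k + 3" and "even n"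
  shows "frac_trunc_metric_dim (cycle_vertices n) (cycle_adj n) k = real n / (real n - 2)"
proof -
  have n: "0 < n" using assms(1) by simp
  obtain m where m: "n = 2 * m" using assms(3) by (rule evenE)
  have "frac_trunc_metric_dim (cycle_vertices n) (cycle_adj n) k = real n / real (n - 2)"
  proof (rule frac_trunc_metric_dim_cycle[where d\<^sub>0 = 2])
    show "n - 2 \<le> card (cycle_resolving_offsets n k (int d))" if "0 < d" "d < n" for d
      using that cycle_resolves_if_small[OF n assms(2)]
      by (intro card_cycle_resolving_offsets_ge(1)[OF n]) simp_all
    show "card (cycle_resolving_offsets n k (int 2)) \<le> n - 2"
      using card_cycle_resolving_offsets_even_le[OF m] m assms(1) by simp
  qed (use assms(1) m in auto)
  then show ?thesis using assms(1) by simp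
qed

lemma frac_trunc_metric_dim_large_cycle:
  assumes "2 * k + 4 \<le> n"
  shows "frac_trunc_metric_dim (cycle_vertices n) (cycle_adj n) k = real n / (2 * (real k + 1))"
proof -
  have "frac_trunc_metric_dim (cycle_vertices n) (cycle_adj n) k = real n / real (2 * k + 2)"
  proof (rule frac_trunc_metric_dim_cycle[where d\<^sub>0 = 1])
    show "2 * k + 2 \<le> card (cycle_resolving_offsets n k (int d))" if "0 < d" "d < n" for d
      using that assms by (intro card_cycle_resolving_offsets_ge_large) simp_all
    show "card (cycle_resolving_offsets n k (int 1)) \<le> 2 * k + 2"
      using assms card_cycle_resolving_offsets_adjacent_le[of k n] by simp
  qed (use assms in auto)
  then show ?thesis by (simp add: algebra_simps)
qed

theorem theorem3p4:
  fixes k n :: nat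
  assumes "k \<ge> 1" and "n \<ge> 3"
  shows "(n \<le> 2 * k + 3 \<and> odd n \<longrightarrow>
            frac_trunc_metric_dim (cycle_vertices n) (cycle_adj n) k = real n / (real n - 1))
       \<and> (n \<le> 2 * k + 3 \<and> even n \<longrightarrow>
            frac_trunc_metric_dim (cycle_vertices n) (cycle_adj n) k = real n / (real n - 2))
       \<and> (n \<ge> 2 * k + 4 \<longrightarrow>
            frac_trunc_metric_dim (cycle_vertices n) (cycle_adj n) k = real n / (2 * (real k + 1)))"
  using frac_trunc_metric_dim_small_odd_cycle[OF assms(2)]
    frac_trunc_metric_dim_small_even_cycle[OF assms(2)]
    frac_trunc_metric_dim_large_cycle
  by blast

end
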